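(* Let $\mathcal{S}\subset\mathbb{T}$ be a measurable set of positive Lebesgue measure. Then there exists a set $\Lambda\subset\mathbb{Z}$ such that: (i') for every $\alpha>1$ there is a constant $C(\alpha)>0$ such that for every $N\in\mathbb{N}$, $\Lambda$ contains an arithmetic progression $\{M+\ell,M+2\ell,\ldots,M+N\ell\}$ of length $N$ (with some $M\in\mathbb{Z}$) whose step $\ell\in\mathbb{N}$ satisfies $\ell< C(\alpha)N^{\alpha}$; and (ii) $E(\Lambda)=\{e^{i\lambda t}\}_{\lambda\in\Lambda}$ is a Riesz sequence in $L^2(\mathcal{S})$.
   Context: $\mathbb{T}=\mathbb{R}/2\pi\mathbb{Z}$, identified with $[-\pi,\pi)$. For $\Lambda\subset\mathbb{Z}$, $E(\Lambda):=\{e^{i\lambda t}\}_{\lambda\in\Lambda}$. A sequence $\{\varphi_i\}_{i\in I}$ in a Hilbert space is a Riesz sequence if there are constants $A,B>0$ such that $A\sum_{i}|c_i|^2\le \|\sum_i c_i\varphi_i\|^2\le B\sum_i|c_i|^2$ for every finite sequence of scalars $\{c_i\}$. The space $L^2(\mathcal{S})$ is taken with the norm $\|f\|^2=\int_{\mathcal{S}}|f(t)|^2\,\frac{dt}{2\pi}$. *)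

theory Defs
  imports "HOL-Analysis.Analysis"
begin

text \<open>The torus T = R/2piZ is identified with [-pi,pi); L^2(S) carries the
  normalised norm  ||f||^2 = integral over S of |f t|^2 dt/(2 pi).\<close>

definition L2S_norm2 :: "real set \<Rightarrow> (real \<Rightarrow> complex) \<Rightarrow> real" where
  "L2S_norm2 S f = (LINT t:S|lebesgue. (cmod (f t))\<^sup>2) / (2 * pi)"

definition riesz_sequence_L2 :: "real set \<Rightarrow> 'i set \<Rightarrow> ('i \<Rightarrow> real \<Rightarrow> complex) \<Rightarrow> bool" where
  "riesz_sequence_L2 S I \<phi> \<longleftrightarrow>
     (\<exists>A B. A > 0 \<and> B > 0 \<and>
        (\<forall>F c. finite F \<longrightarrow> F \<subseteq> I \<longrightarrow>
           A * (\<Sum>i\<in>F. (cmod (c i))\<^sup>2) \<le> L2S_norm2 S (\<lambda>t. \<Sum>i\<in>F. c i * \<phi> i t) \<and>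
           L2S_norm2 S (\<lambda>t. \<Sum>i\<in>F. c i * \<phi> i t) \<le> B * (\<Sum>i\<in>F. (cmod (c i))\<^sup>2)))"

definition exps :: "int \<Rightarrow> real \<Rightarrow> complex" where
  "exps m t = exp (\<i> * of_int m * of_real t)"

end

theory Submission
  imports Defs
begin

text \<open>Let \<open>g = exps_integral S\<close>, so \<open>g n\<close> is the integral of \<open>e\<^sup>i\<^sup>n\<^sup>t\<close> over \<open>S\<close>. Up to the
  factor \<open>1/(2\<pi>)\<close>, the Gram matrix of \<open>E(\<Lambda>)\<close> in \<open>L\<^sup>2(S)\<close> is \<open>(g(\<lambda> - \<mu>))\<close>, with diagonal \<open>|S|\<close>;
  by Schur's test \<open>E(\<Lambda>)\<close> is a Riesz sequence once every off-diagonal row sum of \<open>|g(\<lambda> - \<mu>)|\<close> is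
  at most \<open>|S|/2\<close>. Bessel's inequality gives \<open>\<Sum> |g n|\<^sup>2 \<le> 2\<pi>|S|\<close>. Hence \<open>g n \<rightarrow> 0\<close>, so
  progressions placed far apart hardly interact; and Cauchy-Schwarz, combined with a divisor-counting
  bound on the multiplicative energy of \<open>{1..L} \<times> {1..<N}\<close>, yields a step \<open>l \<le> L \<approx> N log\<^sup>2 N / \<epsilon>\<^sup>2\<close>
  with \<open>\<Sum>\<^sub>m\<^sub><\<^sub>N |g(m l)| \<le> \<epsilon>\<close>, which bounds the interaction inside a progression of length \<open>N\<close>
  and step \<open>l\<close>. \<open>\<Lambda>\<close> is the union of such progressions of lengths \<open>j = 1, 2, \<dots>\<close>, separated by gaps
  so large that the \<open>j\<close>-th one contributes at most \<open>\<epsilon>/2\<^sup>j\<close> to any row.\<close>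

section \<open>Exponentials and their Gram matrix on a subset of the circle\<close>

lemma norm_exps [simp]: "cmod (exps n t) = 1"
  unfolding exps_def by (metis mult.assoc norm_exp_i_times of_real_of_int_eq of_real_mult)

lemma cnj_exps: "cnj (exps n t) = exps (-n) t"
  unfolding exps_def by (simp add: exp_cnj)

lemma exps_mult_cnj: "exps m t * cnj (exps n t) = exps (m - n) t"
  unfolding cnj_exps unfolding exps_def by (simp add: exp_add[symmetric] algebra_simps)

lemma exps_measurable [measurable]: "exps n \<in> borel_measurable lebesgue"
  unfolding exps_def using id_borel_measurable_lebesgue[unfolded id_def] by measurable

lemma exps_minus_pi: "exps n (-pi) = exps n pi"
proof -
  have "exps n pi = exp (\<i> * of_int n * of_real (-pi) + (2 * of_int n * pi) * \<i>)"
    unfolding exps_def by (simp add: algebra_simps)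
  also have "\<dots> = exps n (-pi)"
    unfolding exp_add exps_def using exp_integer_2pi[of "of_int n"] by simp
  finally show ?thesis ..
qed

lemma set_integrable_bounded:
  fixes f :: "'a \<Rightarrow> 'b::{banach, second_countable_topology}"
  assumes "A \<in> sets M" "f \<in> borel_measurable M" "emeasure M A < \<infinity>" "\<And>x. norm (f x) \<le> B"
  shows "set_integrable M A f"
  unfolding set_integrable_def
  by (rule integrableI_bounded_set_indicator) (use assms in auto)

lemma set_integral_sum:
  fixes f :: "'i \<Rightarrow> 'a \<Rightarrow> 'b::{banach, second_countable_topology}"
  assumes "\<And>i. i \<in> I \<Longrightarrow> set_integrable M A (f i)"
  shows "(LINT x:A|M. (\<Sum>i\<in>I. f i x)) = (\<Sum>i\<in>I. LINT x:A|M. f i x)"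
  using assms unfolding set_lebesgue_integral_def set_integrable_def
  by (simp add: scaleR_sum_right integral_sum)

lemma set_integrable_sum:
  fixes f :: "'i \<Rightarrow> 'a \<Rightarrow> 'b::{banach, second_countable_topology}"
  assumes "\<And>i. i \<in> I \<Longrightarrow> set_integrable M A (f i)"
  shows "set_integrable M A (\<lambda>x. \<Sum>i\<in>I. f i x)"
  using assms unfolding set_integrable_def by (simp add: scaleR_sum_right)

lemma set_integral_Re:
  assumes "set_integrable M A (f :: 'a \<Rightarrow> complex)"
  shows "(LINT x:A|M. Re (f x)) = Re (LINT x:A|M. f x)"
  using assms integral_Re[of M "\<lambda>x. indicator A x *\<^sub>R f x"]
  unfolding set_lebesgue_integral_def set_integrable_def by simp

lemma set_integral_cnj:
  "(LINT x:A|M. cnj (f x)) = cnj (LINT x:A|M. f x)"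
proof -
  have "(\<lambda>x. indicat_real A x *\<^sub>R cnj (f x)) = (\<lambda>x. cnj (indicat_real A x *\<^sub>R f x))"
    by (auto simp: indicator_def)
  then show ?thesis
    unfolding set_lebesgue_integral_def by (simp only: Bochner_Integration.integral_cnj)
qed

lemma set_integral_mono_set_nonneg:
  assumes "set_integrable M B (f :: 'a \<Rightarrow> real)" "A \<in> sets M" "A \<subseteq> B" "\<And>x. 0 \<le> f x"
  shows "(LINT x:A|M. f x) \<le> (LINT x:B|M. f x)"
  using assms set_integrable_subset[OF assms(1-3)] unfolding set_lebesgue_integral_def set_integrable_def
  by (intro integral_mono) (auto split: split_indicator)

definition exps_integral :: "real set \<Rightarrow> int \<Rightarrow> complex" where
  "exps_integral S n = (LINT t:S|lebesgue. exps n t)"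

lemma emeasure_subset_period_finite:
  assumes "S \<subseteq> {-pi..pi}"
  shows "emeasure lebesgue S < \<infinity>"
  using emeasure_mono[OF assms, of lebesgue] by (simp add: le_less_trans)

lemma set_integrable_exps:
  assumes "A \<in> sets lebesgue" "emeasure lebesgue A < \<infinity>"
  shows "set_integrable lebesgue A (exps n)"
  by (rule set_integrable_bounded[where B=1]) (use assms in auto)

lemma exps_integral_uminus: "exps_integral S (-n) = cnj (exps_integral S n)"
  unfolding exps_integral_def set_integral_cnj[symmetric] cnj_exps ..

lemma exps_integral_zero:
  assumes "S \<in> sets lebesgue" "emeasure lebesgue S < \<infinity>"
  shows "exps_integral S 0 = measure lebesgue S"
  unfolding exps_integral_def exps_def using set_integral_const[OF assms(1), of "1::complex"] assms(2)
  by (simp add: scaleR_conv_of_real)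

lemma norm2_exps_sum_eq_gram:
  assumes "A \<in> sets lebesgue" "emeasure lebesgue A < \<infinity>" "finite F"
  shows "complex_of_real (LINT t:A|lebesgue. (cmod (\<Sum>i\<in>F. c i * exps i t))\<^sup>2)
       = (\<Sum>i\<in>F. \<Sum>j\<in>F. c i * cnj (c j) * exps_integral A (i - j))"
proof -
  have square: "complex_of_real ((cmod (\<Sum>i\<in>F. c i * exps i t))\<^sup>2)
        = (\<Sum>i\<in>F. \<Sum>j\<in>F. c i * cnj (c j) * exps (i - j) t)" for t
  proof -
    have "complex_of_real ((cmod (\<Sum>i\<in>F. c i * exps i t))\<^sup>2)
        = (\<Sum>i\<in>F. c i * exps i t) * cnj (\<Sum>j\<in>F. c j * exps j t)"
      by (rule complex_norm_square)
    also have "\<dots> = (\<Sum>i\<in>F. \<Sum>j\<in>F. c i * cnj (c j) * (exps i t * cnj (exps j t)))"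
      by (simp add: sum_distrib_left sum_distrib_right algebra_simps) (rule sum.swap)
    finally show ?thesis by (simp add: exps_mult_cnj)
  qed
  have integrable: "set_integrable lebesgue A (\<lambda>t. c i * cnj (c j) * exps (i - j) t)" for i j
    using set_integrable_exps[OF assms(1,2)] by simp
  have "complex_of_real (LINT t:A|lebesgue. (cmod (\<Sum>i\<in>F. c i * exps i t))\<^sup>2)
      = (LINT t:A|lebesgue. (\<Sum>i\<in>F. \<Sum>j\<in>F. c i * cnj (c j) * exps (i - j) t))"
    by (simp only: set_integral_complex_of_real[symmetric] square)
  also have "\<dots> = (\<Sum>i\<in>F. \<Sum>j\<in>F. c i * cnj (c j) * exps_integral A (i - j))"
    unfolding exps_integral_def
    by (simp add: set_integral_sum set_integrable_sum integrable)
  finally show ?thesis .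
qed

lemma exps_integral_period: "exps_integral {-pi..pi} n = (if n = 0 then 2*pi else 0)"
proof (cases "n = 0")
  case True
  then show ?thesis
    using exps_integral_zero[of "{-pi..pi}"] by simp
next
  case False
  have "((\<lambda>t. exp (\<i> * of_int n * t) / (\<i> * of_int n)) has_vector_derivative exp (\<i> * of_int n * t))
      (at t within {-pi..pi})" for t
    using False
    by (intro derivative_eq_intros has_complex_derivative_imp_has_vector_derivative [unfolded o_def] | simp)+
  then have "(exps n has_integral (exps n pi / (\<i> * of_int n) - exps n (-pi) / (\<i> * of_int n))) {-pi..pi}"
    unfolding exps_def by (intro fundamental_theorem_of_calculus) auto
  then have "(exps n has_integral 0) {-pi..pi}"
    by (simp add: exps_minus_pi)
  moreover have "exps_integral {-pi..pi} n = integral {-pi..pi} (exps n)"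
    unfolding exps_integral_def
    by (rule set_lebesgue_integral_eq_integral(2)) (simp add: set_integrable_exps)
  ultimately show ?thesis
    using False by (simp add: integral_unique)
qed

lemma parseval_exps_sum:
  assumes "finite F"
  shows "(LINT t:{-pi..pi}|lebesgue. (cmod (\<Sum>i\<in>F. c i * exps i t))\<^sup>2) = 2*pi * (\<Sum>i\<in>F. (cmod (c i))\<^sup>2)"
proof -
  have "complex_of_real (LINT t:{-pi..pi}|lebesgue. (cmod (\<Sum>i\<in>F. c i * exps i t))\<^sup>2)
     = (\<Sum>i\<in>F. c i * cnj (c i) * (2*pi))"
    using assms by (simp add: norm2_exps_sum_eq_gram exps_integral_period if_distrib cong: if_cong)
  also have "\<dots> = complex_of_real (2*pi * (\<Sum>i\<in>F. (cmod (c i))\<^sup>2))"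
    by (simp add: complex_norm_square sum_distrib_left mult_ac flip: of_real_power)
  finally show ?thesis
    by (simp only: of_real_eq_iff)
qed

lemma set_integral_norm2_const_diff:
  fixes Q :: "'a \<Rightarrow> complex" and a :: real
  assumes A: "A \<in> sets M" "emeasure M A < \<infinity>"
    and [measurable]: "Q \<in> borel_measurable M" and bounded: "\<And>t. cmod (Q t) \<le> C"
  shows "(LINT t:A|M. (cmod (a - Q t))\<^sup>2)
       = a\<^sup>2 * measure M A - 2 * a * Re (LINT t:A|M. Q t) + (LINT t:A|M. (cmod (Q t))\<^sup>2)"
proof -
  have "(cmod (a - Q t))\<^sup>2 = a\<^sup>2 - 2 * a * Re (Q t) + (cmod (Q t))\<^sup>2" for t
    by (simp only: cmod_power2) (simp add: power2_eq_square algebra_simps)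
  moreover have "set_integrable M A Q"
    by (rule set_integrable_bounded[OF A(1) _ A(2) bounded]) simp
  moreover have "set_integrable M A (\<lambda>t. Re (Q t))"
    by (rule set_integrable_bounded[OF A(1) _ A(2), where B=C])
       (auto intro: order_trans[OF abs_Re_le_cmod bounded])
  moreover have "set_integrable M A (\<lambda>t. (cmod (Q t))\<^sup>2)"
    by (rule set_integrable_bounded[OF A(1) _ A(2), where B="C\<^sup>2"])
       (auto intro: power_mono[OF bounded])
  moreover have "set_integrable M A (\<lambda>t. a\<^sup>2)"
    by (rule set_integrable_bounded[OF A(1) _ A(2), where B="a\<^sup>2"]) simp_all
  ultimately show ?thesis
    using A by (simp add: set_integral_diff set_integral_add set_integral_const set_integral_Re)
qed

lemma bessel_exps_integral:
  assumes S: "S \<in> sets lebesgue" "S \<subseteq> {-pi..pi}" and "finite P"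
  shows "(\<Sum>n\<in>P. (cmod (exps_integral S n))\<^sup>2) \<le> 2*pi * measure lebesgue S"
proof -
  have fin: "emeasure lebesgue S < \<infinity>"
    by (rule emeasure_subset_period_finite[OF S(2)])
  define X where "X = (\<Sum>n\<in>P. (cmod (exps_integral S n))\<^sup>2)"
  \<comment> \<open>\<open>Q\<close> is \<open>2\<pi>\<close> times a partial Fourier sum of the indicator of \<open>S\<close>; the bound follows from
     \<open>0 \<le> \<integral>|2\<pi> - Q|\<^sup>2\<close> over \<open>S\<close>, where \<open>\<integral>|Q|\<^sup>2\<close> over \<open>S\<close> is at most its Parseval value \<open>2\<pi> X\<close> on \<open>[-\<pi>, \<pi>]\<close>.\<close>
  define Q where "Q t = (\<Sum>n\<in>P. cnj (exps_integral S n) * exps n t)" for t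
  have Q_bounded: "cmod (Q t) \<le> (\<Sum>n\<in>P. cmod (exps_integral S n))" for t
    unfolding Q_def by (rule order_trans[OF norm_sum]) (simp add: norm_mult)
  have Q_measurable [measurable]: "Q \<in> borel_measurable lebesgue"
    unfolding Q_def by measurable
  have integral_Q: "(LINT t:S|lebesgue. Q t) = X"
    unfolding Q_def X_def exps_integral_def
    by (simp add: set_integral_sum set_integrable_exps[OF S(1) fin] complex_norm_square mult.commute
        flip: of_real_power)
  have "0 \<le> (LINT t:S|lebesgue. (cmod (2*pi - Q t))\<^sup>2)"
    unfolding set_lebesgue_integral_def by (rule Bochner_Integration.integral_nonneg) simp
  also have "\<dots> = 4*pi\<^sup>2 * measure lebesgue S - 4*pi * X + (LINT t:S|lebesgue. (cmod (Q t))\<^sup>2)"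
    using set_integral_norm2_const_diff[OF S(1) fin Q_measurable Q_bounded, of "2*pi"]
    by (simp add: integral_Q power_mult_distrib)
  also have "(LINT t:S|lebesgue. (cmod (Q t))\<^sup>2) \<le> (LINT t:{-pi..pi}|lebesgue. (cmod (Q t))\<^sup>2)"
    by (rule set_integral_mono_set_nonneg[OF _ S(1,2)])
       (auto intro!: set_integrable_bounded[where B="(\<Sum>n\<in>P. cmod (exps_integral S n))\<^sup>2"]
          power_mono[OF Q_bounded])
  also have "\<dots> = 2*pi * X"
    unfolding Q_def X_def using \<open>finite P\<close> by (simp add: parseval_exps_sum)
  finally show ?thesis
    unfolding X_def by (simp add: power2_eq_square algebra_simps)
qed

lemma finite_above_of_bounded_sum_squares:
  fixes G :: "'a \<Rightarrow> real"
  assumes bound: "\<And>P. finite P \<Longrightarrow> (\<Sum>n\<in>P. (G n)\<^sup>2) \<le> B" and "\<delta> > 0"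
  shows "finite {n. \<delta> < G n}"
proof (rule ccontr)
  assume "infinite {n. \<delta> < G n}"
  then obtain P where P: "P \<subseteq> {n. \<delta> < G n}" "finite P" "card P = nat \<lceil>B / \<delta>\<^sup>2\<rceil> + 1"
    using infinite_arbitrarily_large by blast
  have "real (card P) * \<delta>\<^sup>2 = (\<Sum>n\<in>P. \<delta>\<^sup>2)"
    by simp
  also have "\<dots> \<le> (\<Sum>n\<in>P. (G n)\<^sup>2)"
    using P(1) \<open>\<delta> > 0\<close> by (intro sum_mono power_mono) auto
  also have "\<dots> \<le> B"
    by (rule bound[OF P(2)])
  finally have "real (card P) \<le> B / \<delta>\<^sup>2"
    using \<open>\<delta> > 0\<close> by (simp add: field_simps)
  with P(3) show False
    by linarith
qed

lemma eventually_le_of_finite_above: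
  fixes G :: "int \<Rightarrow> real"
  assumes "finite {n. \<delta> < G n}"
  shows "\<exists>D\<ge>1. \<forall>n. D \<le> \<bar>n\<bar> \<longrightarrow> G n \<le> \<delta>"
proof -
  obtain k where "abs ` {n. \<delta> < G n} \<subseteq> {..<k}"
    using assms finite_int_iff_bounded by blast
  then show ?thesis
    by (intro exI[of _ "max 1 k"]) (auto simp: subset_iff not_less[symmetric])
qed

section \<open>Schur's test for the Gram matrix\<close>

lemma sum_off_diagonal_swap:
  assumes "finite F"
  shows "(\<Sum>i\<in>F. \<Sum>j\<in>F - {i}. h i j) = (\<Sum>i\<in>F. \<Sum>j\<in>F - {i}. h j i)"
proof -
  have off_diagonal: "(\<Sum>j\<in>F - {i}. f j) = (\<Sum>j\<in>F. if j = i then 0 else f j)" for i and f :: "_ \<Rightarrow> 'b"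
    using assms by (intro sum.mono_neutral_cong_left) auto
  have "(\<Sum>i\<in>F. \<Sum>j\<in>F - {i}. h i j) = (\<Sum>i\<in>F. \<Sum>j\<in>F. if j = i then 0 else h i j)"
    by (simp only: off_diagonal)
  also have "\<dots> = (\<Sum>j\<in>F. \<Sum>i\<in>F. if j = i then 0 else h i j)"
    by (rule sum.swap)
  also have "\<dots> = (\<Sum>j\<in>F. \<Sum>i\<in>F - {j}. h i j)"
    unfolding off_diagonal by (intro sum.cong refl) auto
  finally show ?thesis .
qed

lemma off_diagonal_form_le:
  fixes g :: "'a::ab_group_add \<Rightarrow> complex"
  assumes "finite F" and sym: "\<And>n. cmod (g (-n)) = cmod (g n)"
    and rows: "\<And>i. i \<in> F \<Longrightarrow> (\<Sum>j\<in>F - {i}. cmod (g (i - j))) \<le> R"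
  shows "cmod (\<Sum>i\<in>F. \<Sum>j\<in>F - {i}. c i * cnj (c j) * g (i - j)) \<le> R * (\<Sum>i\<in>F. (cmod (c i))\<^sup>2)"
proof -
  let ?w = "\<lambda>i j. cmod (g (i - j))"
  have "cmod (\<Sum>i\<in>F. \<Sum>j\<in>F - {i}. c i * cnj (c j) * g (i - j))
      \<le> (\<Sum>i\<in>F. \<Sum>j\<in>F - {i}. cmod (c i) * cmod (c j) * ?w i j)"
    by (rule order_trans[OF norm_sum sum_mono], rule order_trans[OF norm_sum sum_mono])
       (simp add: norm_mult)
  also have "\<dots> \<le> (\<Sum>i\<in>F. \<Sum>j\<in>F - {i}. ((cmod (c i))\<^sup>2/2 + (cmod (c j))\<^sup>2/2) * ?w i j)"
  proof (intro sum_mono mult_right_mono)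
    show "cmod (c i) * cmod (c j) \<le> (cmod (c i))\<^sup>2/2 + (cmod (c j))\<^sup>2/2" for i j
      using sum_squares_bound[of "cmod (c i)" "cmod (c j)"] by (simp add: power2_eq_square)
  qed simp
  also have "\<dots> = (\<Sum>i\<in>F. \<Sum>j\<in>F - {i}. (cmod (c i))\<^sup>2/2 * ?w i j)
                + (\<Sum>i\<in>F. \<Sum>j\<in>F - {i}. (cmod (c j))\<^sup>2/2 * ?w j i)"
    using sym[of "i - j" for i j] by (simp add: distrib_right sum.distrib)
  also have "(\<Sum>i\<in>F. \<Sum>j\<in>F - {i}. (cmod (c j))\<^sup>2/2 * ?w j i)
           = (\<Sum>i\<in>F. \<Sum>j\<in>F - {i}. (cmod (c i))\<^sup>2/2 * ?w i j)"
    by (rule sum_off_diagonal_swap[OF \<open>finite F\<close>, symmetric])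
  also have "(\<Sum>i\<in>F. \<Sum>j\<in>F - {i}. (cmod (c i))\<^sup>2/2 * ?w i j) \<le> (\<Sum>i\<in>F. (cmod (c i))\<^sup>2/2 * R)"
    unfolding sum_distrib_left[symmetric] by (intro sum_mono mult_left_mono rows) auto
  finally show ?thesis
    by (simp add: sum_distrib_left sum_distrib_right mult_ac)
qed

lemma norm2_exps_sum_deviation_le:
  assumes S: "S \<in> sets lebesgue" "emeasure lebesgue S < \<infinity>" and "finite F"
    and rows: "\<And>i. i \<in> F \<Longrightarrow> (\<Sum>j\<in>F - {i}. cmod (exps_integral S (i - j))) \<le> R"
  shows "\<bar>(LINT t:S|lebesgue. (cmod (\<Sum>i\<in>F. c i * exps i t))\<^sup>2) - measure lebesgue S * (\<Sum>i\<in>F. (cmod (c i))\<^sup>2)\<bar>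
      \<le> R * (\<Sum>i\<in>F. (cmod (c i))\<^sup>2)"
proof -
  let ?m = "measure lebesgue S"
  define V where "V = (LINT t:S|lebesgue. (cmod (\<Sum>i\<in>F. c i * exps i t))\<^sup>2)"
  define E where "E = (\<Sum>i\<in>F. \<Sum>j\<in>F - {i}. c i * cnj (c j) * exps_integral S (i - j))"
  have diagonal: "(\<Sum>j\<in>F. c i * cnj (c j) * exps_integral S (i - j))
      = complex_of_real (?m * (cmod (c i))\<^sup>2) + (\<Sum>j\<in>F - {i}. c i * cnj (c j) * exps_integral S (i - j))"
    if "i \<in> F" for i
    using sum.remove[OF \<open>finite F\<close> that, of "\<lambda>j. c i * cnj (c j) * exps_integral S (i - j)"]
    by (simp add: exps_integral_zero[OF S] complex_norm_square mult_ac flip: of_real_power)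
  have "complex_of_real V = complex_of_real (?m * (\<Sum>i\<in>F. (cmod (c i))\<^sup>2)) + E"
    unfolding V_def E_def norm2_exps_sum_eq_gram[OF S \<open>finite F\<close>]
    by (simp add: diagonal sum.distrib sum_distrib_left)
  then have "\<bar>V - ?m * (\<Sum>i\<in>F. (cmod (c i))\<^sup>2)\<bar> = cmod E"
    by (metis add_diff_cancel_left' norm_of_real of_real_diff)
  also have "\<dots> \<le> R * (\<Sum>i\<in>F. (cmod (c i))\<^sup>2)"
    unfolding E_def by (rule off_diagonal_form_le[OF \<open>finite F\<close>]) (auto simp: exps_integral_uminus rows)
  finally show ?thesis
    unfolding V_def .
qed

lemma riesz_sequence_exps_of_row_sums:
  assumes S: "S \<in> sets lebesgue" "S \<subseteq> {-pi..pi}"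
    and R: "0 \<le> R" "R < measure lebesgue S"
    and rows: "\<And>F i. finite F \<Longrightarrow> F \<subseteq> \<Lambda> \<Longrightarrow> i \<in> F \<Longrightarrow>
                 (\<Sum>j\<in>F - {i}. cmod (exps_integral S (i - j))) \<le> R"
  shows "riesz_sequence_L2 S \<Lambda> exps"
proof -
  let ?m = "measure lebesgue S"
  have "(?m - R)/(2*pi) * (\<Sum>i\<in>F. (cmod (c i))\<^sup>2) \<le> L2S_norm2 S (\<lambda>t. \<Sum>i\<in>F. c i * exps i t)
      \<and> L2S_norm2 S (\<lambda>t. \<Sum>i\<in>F. c i * exps i t) \<le> (?m + R)/(2*pi) * (\<Sum>i\<in>F. (cmod (c i))\<^sup>2)"
    if "finite F" "F \<subseteq> \<Lambda>" for F c
  proof -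
    have "(?m - R) * (\<Sum>i\<in>F. (cmod (c i))\<^sup>2) \<le> (LINT t:S|lebesgue. (cmod (\<Sum>i\<in>F. c i * exps i t))\<^sup>2)"
      and "(LINT t:S|lebesgue. (cmod (\<Sum>i\<in>F. c i * exps i t))\<^sup>2) \<le> (?m + R) * (\<Sum>i\<in>F. (cmod (c i))\<^sup>2)"
      using norm2_exps_sum_deviation_le[OF S(1) emeasure_subset_period_finite[OF S(2)] that(1) rows[OF that], of c]
      by (auto simp: abs_le_iff algebra_simps)
    then show ?thesis
      unfolding L2S_norm2_def by (simp add: divide_right_mono)
  qed
  then show ?thesis
    unfolding riesz_sequence_L2_def using R
    by (intro exI[of _ "(?m - R)/(2*pi)"] exI[of _ "(?m + R)/(2*pi)"]) auto
qed

section \<open>Steps with small sums along multiples\<close>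

lemma card_multiples_le:
  assumes "a \<ge> (1::nat)"
  shows "real (card {q\<in>{1..L}. a dvd q}) \<le> real L / real a"
proof -
  have "{q\<in>{1..L}. a dvd q} \<subseteq> (\<lambda>k. a * k) ` {1..L div a}"
  proof
    fix q assume q: "q \<in> {q\<in>{1..L}. a dvd q}"
    then obtain k where k: "q = a * k"
      by auto
    with q assms have "1 \<le> k" "k \<le> L div a"
      by (auto simp: less_eq_div_iff_mult_less_eq mult.commute intro!: Suc_leI gr0I)
    with k show "q \<in> (\<lambda>k. a * k) ` {1..L div a}"
      by auto
  qed
  then have "card {q\<in>{1..L}. a dvd q} \<le> card {1..L div a}"
    by (meson card_image_le card_mono finite_atLeastAtMost finite_imageI order_trans)
  then have "real (card {q\<in>{1..L}. a dvd q}) \<le> real (L div a)"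
    by simp
  also have "\<dots> \<le> real L / real a"
    by (rule of_nat_div_le_of_nat)
  finally show ?thesis .
qed

lemma card_factorizations_le:
  fixes q m L N :: nat
  assumes "q \<ge> 1" "m \<ge> 1"
  shows "card {y\<in>{1..L}\<times>{1..<N}. fst y * snd y = q * m}
       \<le> card {y\<in>{1..<N}\<times>{1..<N}. fst y dvd q \<and> snd y dvd m}"
proof -
  let ?F = "{y\<in>{1..L}\<times>{1..<N}. fst y * snd y = q * m}"
  let ?D = "{y\<in>{1..<N}\<times>{1..<N}. fst y dvd q \<and> snd y dvd m}"
  have "inj_on snd ?F"
  proof (rule inj_onI)
    fix x y assume "x \<in> ?F" "y \<in> ?F" and snd_eq: "snd x = snd y"
    then have "fst x * snd x = fst y * snd x" "snd x \<noteq> 0"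
      by auto
    then show "x = y"
      using snd_eq by (simp add: prod_eq_iff)
  qed
  then have "card ?F = card (snd ` ?F)"
    by (rule card_image[symmetric])
  also have "\<dots> \<le> card ((\<lambda>(a,b). a * b) ` ?D)"
  proof (rule card_mono)
    show "snd ` ?F \<subseteq> (\<lambda>(a,b). a * b) ` ?D"
    proof
      fix d assume "d \<in> snd ` ?F"
      then obtain a' where "a' * d = q * m" "1 \<le> d" "d < N"
        by auto
      then have d: "d dvd q * m" "1 \<le> d" "d < N"
        using dvd_triv_right[of d a'] by simp_all
      then obtain a b where ab: "d = a * b" "a dvd q" "b dvd m"
        by (auto elim: dvd_productE)
      have "1 \<le> a" "1 \<le> b"
        using ab(1) d(2) by (auto simp: Suc_le_eq)
      then have "a \<le> d" "b \<le> d"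
        using ab(1) by auto
      then have "a < N" "b < N"
        using d(3) by linarith+
      with ab \<open>1 \<le> a\<close> \<open>1 \<le> b\<close> have "(a, b) \<in> ?D"
        by auto
      with ab(1) show "d \<in> (\<lambda>(a,b). a * b) ` ?D"
        by (auto intro: image_eqI[of _ _ "(a, b)"])
    qed
  qed simp
  also have "\<dots> \<le> card ?D"
    by (rule card_image_le) simp
  finally show ?thesis .
qed

lemma sum_card_filter_swap:
  assumes "finite X" "finite Y"
  shows "(\<Sum>x\<in>X. card {y\<in>Y. P x y}) = (\<Sum>y\<in>Y. card {x\<in>X. P x y})"
proof -
  have "(\<Sum>x\<in>X. card {y\<in>Y. P x y}) = (\<Sum>x\<in>X. \<Sum>y\<in>Y. if P x y then 1 else 0)"
    using assms by (simp add: sum.If_cases Int_def conj_commute)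
  also have "\<dots> = (\<Sum>y\<in>Y. \<Sum>x\<in>X. if P x y then 1 else 0)"
    by (rule sum.swap)
  also have "\<dots> = (\<Sum>y\<in>Y. card {x\<in>X. P x y})"
    using assms by (simp add: sum.If_cases Int_def conj_commute)
  finally show ?thesis .
qed

lemma sum_inverse_le_harm: "(\<Sum>a\<in>{1..<N}. 1 / real a) \<le> harm N"
  unfolding harm_def inverse_eq_divide by (rule sum_mono2) auto

lemma sum_card_divisor_pairs_le:
  "(\<Sum>x\<in>{1..L}\<times>{1..<N}. real (card {y\<in>{1..<N}\<times>{1..<N}. fst y dvd fst x \<and> snd y dvd snd x}))
     \<le> real L * real N * (harm N)\<^sup>2"
proof -
  let ?Y = "{1..<N}\<times>{1..<N}"
  have "(\<Sum>x\<in>{1..L}\<times>{1..<N}. real (card {y\<in>?Y. fst y dvd fst x \<and> snd y dvd snd x}))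
      = (\<Sum>y\<in>?Y. real (card {q\<in>{1..L}. fst y dvd q}) * real (card {m\<in>{1..<N}. snd y dvd m}))"
  proof -
    have "(\<Sum>x\<in>{1..L}\<times>{1..<N}. card {y\<in>?Y. fst y dvd fst x \<and> snd y dvd snd x})
        = (\<Sum>y\<in>?Y. card {x\<in>{1..L}\<times>{1..<N}. fst y dvd fst x \<and> snd y dvd snd x})"
      by (rule sum_card_filter_swap) auto
    moreover have "{x\<in>{1..L}\<times>{1..<N}. fst y dvd fst x \<and> snd y dvd snd x}
        = {q\<in>{1..L}. fst y dvd q} \<times> {m\<in>{1..<N}. snd y dvd m}" for y :: "nat \<times> nat"
      by auto
    ultimately show ?thesis
      by (simp only: of_nat_sum[symmetric] card_cartesian_product) (simp only: of_nat_sum of_nat_mult)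
  qed
  also have "\<dots> \<le> (\<Sum>y\<in>?Y. (real L / real (fst y)) * (real N / real (snd y)))"
  proof (rule sum_mono)
    fix y assume y: "y \<in> ?Y"
    have "card {m\<in>{1..<N}. snd y dvd m} \<le> card {m\<in>{1..N}. snd y dvd m}"
      by (rule card_mono) auto
    then have "real (card {m\<in>{1..<N}. snd y dvd m}) \<le> real (card {m\<in>{1..N}. snd y dvd m})"
      by simp
    also have "\<dots> \<le> real N / real (snd y)"
      by (rule card_multiples_le) (use y in auto)
    finally have "real (card {m\<in>{1..<N}. snd y dvd m}) \<le> real N / real (snd y)" .
    then show "real (card {q\<in>{1..L}. fst y dvd q}) * real (card {m\<in>{1..<N}. snd y dvd m})
        \<le> (real L / real (fst y)) * (real N / real (snd y))"
      using y by (intro mult_mono card_multiples_le) auto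
  qed
  also have "\<dots> = real L * real N * (\<Sum>a\<in>{1..<N}. 1 / real a)\<^sup>2"
    unfolding power2_eq_square sum_product
    by (simp add: sum.cartesian_product case_prod_beta sum_distrib_left mult_ac)
  also have "\<dots> \<le> real L * real N * (harm N)\<^sup>2"
    by (intro mult_left_mono power_mono sum_inverse_le_harm) (auto intro: sum_nonneg)
  finally show ?thesis .
qed

lemma multiplicative_energy_le:
  fixes L N :: nat
  defines "X \<equiv> {1..L}\<times>{1..<N}"
  shows "(\<Sum>x\<in>X. real (card {y\<in>X. fst y * snd y = fst x * snd x})) \<le> real L * real N * (harm N)\<^sup>2"
proof -
  have "(\<Sum>x\<in>X. real (card {y\<in>X. fst y * snd y = fst x * snd x}))
      \<le> (\<Sum>x\<in>X. real (card {y\<in>{1..<N}\<times>{1..<N}. fst y dvd fst x \<and> snd y dvd snd x}))"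
  proof (rule sum_mono)
    fix x assume "x \<in> X"
    then have "1 \<le> fst x" "1 \<le> snd x"
      unfolding X_def by auto
    from card_factorizations_le[OF this, of L N] show
      "real (card {y\<in>X. fst y * snd y = fst x * snd x})
       \<le> real (card {y\<in>{1..<N}\<times>{1..<N}. fst y dvd fst x \<and> snd y dvd snd x})"
      unfolding X_def by (simp add: case_prod_beta)
  qed
  also have "\<dots> \<le> real L * real N * (harm N)\<^sup>2"
    unfolding X_def by (rule sum_card_divisor_pairs_le)
  finally show ?thesis .
qed

lemma sum_multiples_square_le:
  fixes G :: "int \<Rightarrow> real" and L N :: nat
  assumes G_nonneg: "\<And>n. 0 \<le> G n" and bessel: "\<And>P. finite P \<Longrightarrow> (\<Sum>n\<in>P. (G n)\<^sup>2) \<le> B"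
  shows "(\<Sum>l\<in>{1..L}. \<Sum>m\<in>{1..<N}. G (int m * int l))\<^sup>2 \<le> real L * real N * (harm N)\<^sup>2 * B"
proof -
  define X where "X = {1..L}\<times>{1..<N}"
  define \<phi> where "\<phi> x = fst x * snd x" for x :: "nat \<times> nat"
  define r where "r n = card {y\<in>X. \<phi> y = n}" for n
  have "finite X"
    unfolding X_def by simp
  have "(\<Sum>l\<in>{1..L}. \<Sum>m\<in>{1..<N}. G (int m * int l)) = (\<Sum>x\<in>X. G (int (\<phi> x)))"
    unfolding X_def \<phi>_def by (simp add: sum.cartesian_product case_prod_beta mult.commute)
  also have "\<dots> = (\<Sum>n\<in>\<phi> ` X. real (r n) * G (int n))"
    unfolding r_def using sum.image_gen[OF \<open>finite X\<close>, of "\<lambda>x. G (int (\<phi> x))" \<phi>]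
    by simp
  finally have sum_eq: "(\<Sum>l\<in>{1..L}. \<Sum>m\<in>{1..<N}. G (int m * int l)) = (\<Sum>n\<in>\<phi> ` X. real (r n) * G (int n))" .
  have energy: "(\<Sum>n\<in>\<phi> ` X. (real (r n))\<^sup>2) = (\<Sum>x\<in>X. real (r (\<phi> x)))"
    unfolding r_def using sum.image_gen[OF \<open>finite X\<close>, of "\<lambda>x. real (r (\<phi> x))" \<phi>]
    by (simp add: power2_eq_square r_def)
  have G_bound: "(\<Sum>n\<in>\<phi> ` X. (G (int n))\<^sup>2) \<le> B"
    using bessel[of "int ` \<phi> ` X"] \<open>finite X\<close> by (simp add: sum.reindex)
  have "(\<Sum>n\<in>\<phi> ` X. real (r n) * G (int n))\<^sup>2 \<le> (\<Sum>n\<in>\<phi> ` X. (real (r n))\<^sup>2) * (\<Sum>n\<in>\<phi> ` X. (G (int n))\<^sup>2)"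
    by (rule Cauchy_Schwarz_ineq_sum)
  also have "\<dots> \<le> (\<Sum>x\<in>X. real (r (\<phi> x))) * B"
    unfolding energy by (intro mult_left_mono G_bound sum_nonneg) simp
  also have "\<dots> \<le> real L * real N * (harm N)\<^sup>2 * B"
    using multiplicative_energy_le[of L N] bessel[of "{}"]
    by (intro mult_right_mono) (simp_all add: X_def r_def \<phi>_def)
  finally show ?thesis
    unfolding sum_eq .
qed

lemma exists_step_small_sum:
  fixes G :: "int \<Rightarrow> real" and L N :: nat
  assumes G_nonneg: "\<And>n. 0 \<le> G n" and bessel: "\<And>P. finite P \<Longrightarrow> (\<Sum>n\<in>P. (G n)\<^sup>2) \<le> B"
    and "\<epsilon> > 0" "L \<ge> 1" and large: "B * real N * (harm N)\<^sup>2 \<le> real L * \<epsilon>\<^sup>2"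
  shows "\<exists>l\<in>{1..L}. (\<Sum>m\<in>{1..<N}. G (int m * int l)) \<le> \<epsilon>"
proof (rule ccontr)
  assume "\<not> ?thesis"
  then have "real L * \<epsilon> < (\<Sum>l\<in>{1..L}. \<Sum>m\<in>{1..<N}. G (int m * int l))"
    using \<open>L \<ge> 1\<close> sum_strict_mono[of "{1..L}" "\<lambda>_. \<epsilon>"] by (simp add: not_le)
  then have "(real L * \<epsilon>)\<^sup>2 < (\<Sum>l\<in>{1..L}. \<Sum>m\<in>{1..<N}. G (int m * int l))\<^sup>2"
    by (rule power_strict_mono) (use \<open>\<epsilon> > 0\<close> in auto)
  also have "\<dots> \<le> real L * (B * real N * (harm N)\<^sup>2)"
    using sum_multiples_square_le[OF G_nonneg bessel, where L=L and N=N] by (simp add: mult_ac)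
  also have "\<dots> \<le> real L * (real L * \<epsilon>\<^sup>2)"
    by (rule mult_left_mono[OF large]) simp
  finally show False
    by (simp add: power2_eq_square mult_ac)
qed

lemma harm_le_one_plus_ln: "n \<ge> 1 \<Longrightarrow> harm n \<le> 1 + ln (real n)"
  using euler_mascheroni_sequence_decreasing[of 1 n] by (simp add: harm_def)

lemma harm_le_powr:
  assumes "\<beta> > 0" "n \<ge> 1"
  shows "harm n \<le> (1 + 1/\<beta>) * real n powr \<beta>"
proof -
  have "1 \<le> real n powr \<beta>"
    using assms by (simp add: ge_one_powr_ge_zero)
  have "\<beta> * ln (real n) = ln (real n powr \<beta>)"
    using assms by (simp add: ln_powr)
  also have "\<dots> \<le> real n powr \<beta> - 1"
    by (rule ln_le_minus_one) (use assms in simp)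
  finally have "ln (real n) \<le> real n powr \<beta> / \<beta>"
    using assms by (simp add: field_simps)
  with \<open>1 \<le> real n powr \<beta>\<close> harm_le_one_plus_ln[OF assms(2)] show ?thesis
    by (simp add: field_simps)
qed

lemma mult_harm_square_le_powr:
  assumes "\<alpha> > 1" "N \<ge> 1"
  shows "real N * (harm N)\<^sup>2 \<le> ((\<alpha> + 1) / (\<alpha> - 1))\<^sup>2 * real N powr \<alpha>"
proof -
  define \<beta> where "\<beta> = (\<alpha> - 1) / 2"
  have "\<beta> > 0" "1 + 1/\<beta> = (\<alpha> + 1) / (\<alpha> - 1)"
    using \<open>\<alpha> > 1\<close> by (simp_all add: \<beta>_def field_simps)
  have "real N * (real N powr \<beta>)\<^sup>2 = real N powr 1 * (real N powr \<beta> * real N powr \<beta>)"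
    using \<open>N \<ge> 1\<close> by (simp add: power2_eq_square)
  also have "\<dots> = real N powr (1 + \<beta> + \<beta>)"
    by (simp only: powr_add mult.assoc)
  also have "1 + \<beta> + \<beta> = \<alpha>"
    by (simp add: \<beta>_def)
  finally have N_powr: "real N * (real N powr \<beta>)\<^sup>2 = real N powr \<alpha>" .
  have "(harm N)\<^sup>2 \<le> ((1 + 1/\<beta>) * real N powr \<beta>)\<^sup>2"
    by (rule power_mono[OF harm_le_powr[OF \<open>\<beta> > 0\<close> \<open>N \<ge> 1\<close>] harm_nonneg])
  then have "real N * (harm N)\<^sup>2 \<le> real N * ((1 + 1/\<beta>) * real N powr \<beta>)\<^sup>2"
    by (rule mult_left_mono) simp
  also have "\<dots> = ((\<alpha> + 1) / (\<alpha> - 1))\<^sup>2 * real N powr \<alpha>"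
    unfolding power_mult_distrib N_powr[symmetric] \<open>1 + 1/\<beta> = (\<alpha> + 1) / (\<alpha> - 1)\<close>
    by (simp add: mult_ac)
  finally show ?thesis .
qed

lemma exists_short_steps:
  fixes G :: "int \<Rightarrow> real"
  assumes G_nonneg: "\<And>n. 0 \<le> G n" and bessel: "\<And>P. finite P \<Longrightarrow> (\<Sum>n\<in>P. (G n)\<^sup>2) \<le> B"
    and "\<epsilon> > 0" "\<alpha> > 1"
  shows "\<exists>C>0. \<forall>N\<ge>1. \<exists>l\<ge>1. (\<Sum>m\<in>{1..<N}. G (int m * int l)) \<le> \<epsilon> \<and> real l < C * real N powr \<alpha>"
proof -
  have "0 \<le> B"
    using bessel[of "{}"] by simp
  define K where "K = B * ((\<alpha> + 1) / (\<alpha> - 1))\<^sup>2 / \<epsilon>\<^sup>2"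
  have "K \<ge> 0"
    unfolding K_def using \<open>0 \<le> B\<close> by simp
  have "\<exists>l\<ge>1. (\<Sum>m\<in>{1..<N}. G (int m * int l)) \<le> \<epsilon> \<and> real l < (K + 3) * real N powr \<alpha>"
    if "N \<ge> 1" for N
  proof -
    define L where "L = nat \<lceil>B * real N * (harm N)\<^sup>2 / \<epsilon>\<^sup>2\<rceil> + 1"
    have "B * real N * (harm N)\<^sup>2 / \<epsilon>\<^sup>2 \<le> real L"
      unfolding L_def by linarith
    then have "B * real N * (harm N)\<^sup>2 \<le> real L * \<epsilon>\<^sup>2"
      using \<open>\<epsilon> > 0\<close> by (simp add: field_simps)
    then obtain l where l: "l \<in> {1..L}" "(\<Sum>m\<in>{1..<N}. G (int m * int l)) \<le> \<epsilon>"
      using exists_step_small_sum[OF G_nonneg bessel \<open>\<epsilon> > 0\<close>] unfolding L_def by fastforce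
    have "B * (real N * (harm N)\<^sup>2) / \<epsilon>\<^sup>2 \<le> K * real N powr \<alpha>"
      unfolding K_def using mult_harm_square_le_powr[OF \<open>\<alpha> > 1\<close> that] \<open>0 \<le> B\<close>
      by (simp add: divide_right_mono mult_left_mono mult.assoc)
    moreover have "real L \<le> B * (real N * (harm N)\<^sup>2) / \<epsilon>\<^sup>2 + 2"
      unfolding L_def using \<open>0 \<le> B\<close> by (simp add: of_nat_nat harm_nonneg mult.assoc) linarith
    moreover have "2 < 3 * real N powr \<alpha>"
      using ge_one_powr_ge_zero[of "real N" \<alpha>] that \<open>\<alpha> > 1\<close> by simp
    ultimately have "real L < (K + 3) * real N powr \<alpha>"
      by (simp add: distrib_right)
    then show ?thesis
      using l by force
  qed
  then show ?thesis
    using \<open>K \<ge> 0\<close> by (intro exI[of _ "K + 3"]) auto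
qed

section \<open>Separated blocks of arithmetic progressions\<close>

definition progression :: "int \<Rightarrow> nat \<Rightarrow> nat \<Rightarrow> int set" where
  "progression M l N = {M + int k * int l | k. 1 \<le> k \<and> k \<le> N}"

lemma progression_eq_image: "progression M l N = (\<lambda>k. M + int k * int l) ` {1..N}"
  unfolding progression_def by auto

lemma card_progression_le: "card (progression M l N) \<le> N"
  unfolding progression_eq_image using card_image_le[of "{1..N}"] by simp

lemma finite_progression [simp]: "finite (progression M l N)"
  unfolding progression_eq_image by simp

lemma progression_bounds:
  assumes "l \<ge> 1" "a \<in> progression M l N"
  shows "M + 1 \<le> a" "a \<le> M + int N * int l"
proof -
  obtain k where k: "a = M + int k * int l" "1 \<le> k" "k \<le> N"
    using assms(2) unfolding progression_def by auto
  have "1 \<le> int k * int l"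
    using mult_mono[of 1 "int k" 1 "int l"] k(2) assms(1) by simp
  then show "M + 1 \<le> a"
    using k(1) by simp
  have "int k * int l \<le> int N * int l"
    using k(3) by (intro mult_right_mono) auto
  then show "a \<le> M + int N * int l"
    using k(1) by simp
qed

lemma sum_comp_inj_le:
  fixes f :: "'b \<Rightarrow> real"
  assumes "inj_on h A" "h ` A \<subseteq> B" "finite B" "\<And>x. x \<in> B \<Longrightarrow> 0 \<le> f x"
  shows "(\<Sum>x\<in>A. f (h x)) \<le> sum f B"
proof -
  have "(\<Sum>x\<in>A. f (h x)) = sum f (h ` A)"
    by (simp add: sum.reindex[OF assms(1)])
  also have "\<dots> \<le> sum f B"
    by (rule sum_mono2[OF assms(3,2)]) (use assms(2,4) in auto)
  finally show ?thesis .
qed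

lemma sum_progression_differences_le:
  fixes G :: "int \<Rightarrow> real"
  assumes G_nonneg: "\<And>n. 0 \<le> G n" and G_sym: "\<And>n. G (-n) = G n"
    and "l \<ge> 1" and i: "i \<in> progression M l N"
  shows "(\<Sum>x\<in>progression M l N - {i}. G (i - x)) \<le> 2 * (\<Sum>m\<in>{1..<N}. G (int m * int l))"
proof -
  define h where "h k = M + int k * int l" for k
  obtain k where k: "i = h k" "1 \<le> k" "k \<le> N"
    using i unfolding progression_def h_def by auto
  have "inj h"
    unfolding h_def using \<open>l \<ge> 1\<close> by (auto intro!: injI)
  then have "progression M l N - {i} = h ` ({1..N} - {k})"
    unfolding progression_eq_image h_def[symmetric] k(1) by (simp add: image_set_diff)
  then have "(\<Sum>x\<in>progression M l N - {i}. G (i - x)) = (\<Sum>k'\<in>{1..N} - {k}. G (h k - h k'))"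
    using \<open>inj h\<close> k(1) by (simp add: sum.reindex inj_on_subset[OF \<open>inj h\<close>])
  also have "\<dots> = (\<Sum>k'\<in>{k'\<in>{1..N}. k' < k}. G (int (k - k') * int l))
                + (\<Sum>k'\<in>{k'\<in>{1..N}. k < k'}. G (int (k' - k) * int l))"
  proof -
    have "{1..N} - {k} = {k'\<in>{1..N}. k' < k} \<union> {k'\<in>{1..N}. k < k'}"
      by auto
    moreover have "G (h k - h k') = G (int (k' - k) * int l)" if "k < k'" for k'
      using G_sym[of "h k' - h k"] that by (simp add: h_def of_nat_diff algebra_simps)
    moreover have "G (h k - h k') = G (int (k - k') * int l)" if "k' < k" for k'
      using that by (simp add: h_def of_nat_diff algebra_simps)
    ultimately show ?thesis
      by (simp add: sum.union_disjoint disjoint_iff)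
  qed
  also have "\<dots> \<le> (\<Sum>m\<in>{1..<N}. G (int m * int l)) + (\<Sum>m\<in>{1..<N}. G (int m * int l))"
    by (intro add_mono sum_comp_inj_le[where f="\<lambda>m. G (int m * int l)", simplified])
       (use k G_nonneg in \<open>auto intro!: inj_onI\<close>)
  finally show ?thesis
    by simp
qed

fun block_start :: "(nat \<Rightarrow> nat) \<Rightarrow> (nat \<Rightarrow> int) \<Rightarrow> nat \<Rightarrow> int" where
  "block_start l D 0 = 0"
| "block_start l D (Suc j) = block_start l D j + int j * int (l j) + D (Suc j)"

definition block :: "(nat \<Rightarrow> nat) \<Rightarrow> (nat \<Rightarrow> int) \<Rightarrow> nat \<Rightarrow> int set" where
  "block l D j = progression (block_start l D j) (l j) j"

lemma block_end_mono:
  assumes "\<And>j. D j \<ge> 0" "j \<le> j'"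
  shows "block_start l D j + int j * int (l j) \<le> block_start l D j' + int j' * int (l j')"
  using assms(2)
proof (induction j' rule: dec_induct)
  case (step n)
  have "0 \<le> int (Suc n) * int (l (Suc n))"
    by simp
  with step.IH assms(1)[of "Suc n"] show ?case
    by (simp only: block_start.simps)
qed simp

lemma block_separated:
  assumes "\<And>j. D j \<ge> 1" "\<And>j. l j \<ge> 1"
    and "j < j'" "a \<in> block l D j" "b \<in> block l D j'"
  shows "D j' \<le> b - a"
proof -
  obtain p where p: "j' = Suc p" "j \<le> p"
    using \<open>j < j'\<close> by (cases j') auto
  have "a \<le> block_start l D j + int j * int (l j)"
    using progression_bounds(2) assms(2,4) unfolding block_def by blast
  also have "\<dots> \<le> block_start l D p + int p * int (l p)"
    by (rule block_end_mono) (use assms(1) p in \<open>auto intro: order_trans[OF zero_le_one]\<close>)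
  finally have "a \<le> block_start l D p + int p * int (l p)" .
  moreover have "block_start l D j' + 1 \<le> b"
    using progression_bounds(1) assms(2,5) unfolding block_def by blast
  ultimately show ?thesis
    using p(1) by simp
qed

lemma block_index_ge_1: "x \<in> block l D j \<Longrightarrow> j \<ge> 1"
  unfolding block_def progression_def by auto

lemma finite_subset_blocks_le:
  assumes "finite F" "F \<subseteq> (\<Union>j. block l D j)"
  shows "\<exists>K\<ge>j0. F \<subseteq> (\<Union>j\<in>{1..K}. block l D j)"
proof -
  obtain idx where idx: "\<And>x. x \<in> F \<Longrightarrow> x \<in> block l D (idx x)"
    using assms(2) by (metis UN_E subsetD)
  define K where "K = Max (insert j0 (idx ` F))"
  have "idx x \<in> {1..K}" if "x \<in> F" for x
    using assms(1) that block_index_ge_1[OF idx[OF that]] unfolding K_def by simp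
  with idx have "F \<subseteq> (\<Union>j\<in>{1..K}. block l D j)"
    by blast
  moreover have "j0 \<le> K"
    using assms(1) unfolding K_def by simp
  ultimately show ?thesis
    by blast
qed

lemma sum_block_other_le:
  fixes G :: "int \<Rightarrow> real"
  assumes G_nonneg: "\<And>n. 0 \<le> G n" and "\<epsilon> \<ge> 0"
    and D: "\<And>j. D j \<ge> 1" and l: "\<And>j. l j \<ge> 1"
    and decay: "\<And>j n. j \<ge> 1 \<Longrightarrow> D j \<le> \<bar>n\<bar> \<Longrightarrow> G n \<le> \<epsilon> / (j * 2 ^ j)"
    and i: "i \<in> block l D j0" and "j \<noteq> j0"
  shows "(\<Sum>x\<in>block l D j - {i}. G (i - x)) \<le> \<epsilon> / 2 ^ j"
proof -
  let ?J = "max j j0"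
  have "j0 \<ge> 1"
    using i by (rule block_index_ge_1)
  have bound: "G (i - x) \<le> \<epsilon> / (?J * 2 ^ ?J)" if x: "x \<in> block l D j" for x
  proof (cases "j < j0")
    case True
    then have "D j0 \<le> \<bar>i - x\<bar>"
      using block_separated[OF D l True x i] by simp
    with True show ?thesis
      using decay[OF \<open>j0 \<ge> 1\<close>] by (simp add: max_def)
  next
    case False
    then have "j0 < j"
      using \<open>j \<noteq> j0\<close> by simp
    then have "D j \<le> \<bar>i - x\<bar>"
      using block_separated[OF D l _ i x] by simp
    with \<open>j0 < j\<close> show ?thesis
      using decay[of j] by (simp add: max_def)
  qed
  then have "(\<Sum>x\<in>block l D j - {i}. G (i - x)) \<le> card (block l D j - {i}) * (\<epsilon> / (?J * 2 ^ ?J))"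
    by (intro sum_bounded_above) simp
  also have "\<dots> \<le> ?J * (\<epsilon> / (?J * 2 ^ ?J))"
  proof (rule mult_right_mono)
    have "card (block l D j - {i}) \<le> j"
      using card_Diff1_le[of "block l D j" i] card_progression_le unfolding block_def
      by (meson le_trans)
    then show "real (card (block l D j - {i})) \<le> real ?J"
      by simp
  qed (use \<open>\<epsilon> \<ge> 0\<close> in simp)
  also have "\<dots> = \<epsilon> / 2 ^ ?J"
    using \<open>j0 \<ge> 1\<close> by (simp add: field_simps)
  also have "\<dots> \<le> \<epsilon> / 2 ^ j"
    using \<open>\<epsilon> \<ge> 0\<close> by (intro divide_left_mono) auto
  finally show ?thesis .
qed

lemma sum_UN_le:
  fixes f :: "'a \<Rightarrow> real"
  assumes "finite I" "\<And>j. j \<in> I \<Longrightarrow> finite (A j)" "\<And>x. 0 \<le> f x"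
  shows "sum f (\<Union>j\<in>I. A j) \<le> (\<Sum>j\<in>I. sum f (A j))"
proof -
  have "(\<Union>j\<in>I. A j) = snd ` Sigma I A"
    by force
  then have "sum f (\<Union>j\<in>I. A j) \<le> sum (f \<circ> snd) (Sigma I A)"
    using sum_image_le[of "Sigma I A" f snd] assms by simp
  also have "\<dots> = (\<Sum>j\<in>I. sum f (A j))"
    using sum.Sigma[of I A "\<lambda>_. f"] assms(1,2) by (simp add: case_prod_beta)
  finally show ?thesis .
qed

lemma sum_divide_power2_le:
  assumes "(\<epsilon>::real) \<ge> 0"
  shows "(\<Sum>j\<in>{1..K}. \<epsilon> / 2 ^ j) \<le> \<epsilon>"
proof -
  have "(\<Sum>j\<in>{1..K}. \<epsilon> / 2 ^ j) = \<epsilon> - \<epsilon> / 2 ^ K"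
    by (induction K) (simp_all add: field_simps)
  then show ?thesis
    using assms by simp
qed

lemma sum_blocks_row_le:
  fixes G :: "int \<Rightarrow> real"
  assumes G_nonneg: "\<And>n. 0 \<le> G n" and G_sym: "\<And>n. G (-n) = G n" and "\<epsilon> \<ge> 0"
    and D: "\<And>j. D j \<ge> 1" and l: "\<And>j. l j \<ge> 1"
    and decay: "\<And>j n. j \<ge> 1 \<Longrightarrow> D j \<le> \<bar>n\<bar> \<Longrightarrow> G n \<le> \<epsilon> / (j * 2 ^ j)"
    and short: "\<And>j. (\<Sum>m\<in>{1..<j}. G (int m * int (l j))) \<le> \<epsilon>"
    and F: "finite F" "F \<subseteq> (\<Union>j. block l D j)" and "i \<in> F"
  shows "(\<Sum>x\<in>F - {i}. G (i - x)) \<le> 3 * \<epsilon>"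
proof -
  obtain j0 where i: "i \<in> block l D j0"
    using F(2) \<open>i \<in> F\<close> by auto
  then have "j0 \<ge> 1"
    by (rule block_index_ge_1)
  obtain K where "j0 \<le> K" and K: "F \<subseteq> (\<Union>j\<in>{1..K}. block l D j)"
    using finite_subset_blocks_le[OF F] by blast
  have "j0 \<in> {1..K}"
    using \<open>j0 \<ge> 1\<close> \<open>j0 \<le> K\<close> by simp
  from K have "F - {i} \<subseteq> (\<Union>j\<in>{1..K}. block l D j - {i})"
    by blast
  then have "(\<Sum>x\<in>F - {i}. G (i - x)) \<le> (\<Sum>x\<in>(\<Union>j\<in>{1..K}. block l D j - {i}). G (i - x))"
    by (intro sum_mono2) (auto simp: G_nonneg block_def)
  also have "\<dots> \<le> (\<Sum>j\<in>{1..K}. \<Sum>x\<in>block l D j - {i}. G (i - x))"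
    by (rule sum_UN_le) (auto simp: G_nonneg block_def)
  also have "\<dots> = (\<Sum>x\<in>block l D j0 - {i}. G (i - x)) + (\<Sum>j\<in>{1..K} - {j0}. \<Sum>x\<in>block l D j - {i}. G (i - x))"
    by (rule sum.remove) (use \<open>j0 \<in> {1..K}\<close> in auto)
  also have "(\<Sum>x\<in>block l D j0 - {i}. G (i - x)) \<le> 2 * \<epsilon>"
    using sum_progression_differences_le[where G=G, OF G_nonneg G_sym l[of j0] i[unfolded block_def]] short[of j0]
    unfolding block_def by linarith
  also have "(\<Sum>j\<in>{1..K} - {j0}. \<Sum>x\<in>block l D j - {i}. G (i - x)) \<le> (\<Sum>j\<in>{1..K} - {j0}. \<epsilon> / 2 ^ j)"
    by (intro sum_mono sum_block_other_le[where G=G, OF G_nonneg \<open>\<epsilon> \<ge> 0\<close> D l decay i]) auto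
  also have "\<dots> \<le> (\<Sum>j\<in>{1..K}. \<epsilon> / 2 ^ j)"
    using \<open>\<epsilon> \<ge> 0\<close> by (intro sum_mono2) auto
  also have "\<dots> \<le> \<epsilon>"
    by (rule sum_divide_power2_le[OF \<open>\<epsilon> \<ge> 0\<close>])
  finally show ?thesis
    by simp
qed

definition has_short_progressions :: "int set \<Rightarrow> bool" where
  "has_short_progressions \<Lambda> \<longleftrightarrow>
     (\<forall>\<alpha>::real. \<alpha> > 1 \<longrightarrow> (\<exists>C::real. C > 0 \<and> (\<forall>N::nat. N \<ge> 1 \<longrightarrow>
        (\<exists>(M::int) (l::nat). l \<ge> 1 \<and> real l < C * real N powr \<alpha> \<and> progression M l N \<subseteq> \<Lambda>))))"

lemma exists_uniformly_short_steps:
  fixes G :: "int \<Rightarrow> real"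
  assumes G_nonneg: "\<And>n. 0 \<le> G n" and bessel: "\<And>P. finite P \<Longrightarrow> (\<Sum>n\<in>P. (G n)\<^sup>2) \<le> B"
    and "\<epsilon> > 0"
  shows "\<exists>l. (\<forall>N. l N \<ge> 1 \<and> (\<Sum>m\<in>{1..<N}. G (int m * int (l N))) \<le> \<epsilon>) \<and>
             (\<forall>\<alpha>>1. \<exists>C>0. \<forall>N\<ge>1. real (l N) < C * real N powr \<alpha>)"
proof -
  define short where "short N l \<longleftrightarrow> l \<ge> 1 \<and> (\<Sum>m\<in>{1..<N}. G (int m * int l)) \<le> \<epsilon>" for N l
  have "\<exists>l. short N l" for N
  proof (cases "N \<ge> 1")
    case True
    then show ?thesis
      using exists_short_steps[OF G_nonneg bessel \<open>\<epsilon> > 0\<close>, of 2] unfolding short_def by force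
  next
    case False
    then show ?thesis
      using \<open>\<epsilon> > 0\<close> unfolding short_def by (intro exI[of _ 1]) simp
  qed
  \<comment> \<open>The least admissible step does not depend on \<open>\<alpha>\<close>, yet is below every admissible one.\<close>
  define l where "l N = (LEAST l. short N l)" for N
  have l: "short N (l N)" and l_least: "short N l' \<Longrightarrow> l N \<le> l'" for N l'
    unfolding l_def by (auto intro: LeastI_ex[OF \<open>\<exists>l. short N l\<close>] Least_le)
  have "\<exists>C>0. \<forall>N\<ge>1. real (l N) < C * real N powr \<alpha>" if \<alpha>: "\<alpha> > 1" for \<alpha>
  proof -
    obtain C where "C > 0"
      and C: "\<forall>N\<ge>1. \<exists>l'\<ge>1. (\<Sum>m\<in>{1..<N}. G (int m * int l')) \<le> \<epsilon> \<and> real l' < C * real N powr \<alpha>"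
      using exists_short_steps[OF G_nonneg bessel \<open>\<epsilon> > 0\<close> \<alpha>] by blast
    have "real (l N) < C * real N powr \<alpha>" if "N \<ge> 1" for N
      using C l_least[of N] that unfolding short_def by (meson of_nat_le_iff order.strict_trans1)
    with \<open>C > 0\<close> show ?thesis
      by blast
  qed
  with l show ?thesis
    unfolding short_def by blast
qed

lemma exists_short_progressions_small_rows:
  fixes G :: "int \<Rightarrow> real"
  assumes G_nonneg: "\<And>n. 0 \<le> G n" and G_sym: "\<And>n. G (-n) = G n"
    and bessel: "\<And>P. finite P \<Longrightarrow> (\<Sum>n\<in>P. (G n)\<^sup>2) \<le> B"
    and decay: "\<And>\<delta>. \<delta> > 0 \<Longrightarrow> \<exists>D\<ge>1. \<forall>n. D \<le> \<bar>n\<bar> \<longrightarrow> G n \<le> \<delta>"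
    and "\<epsilon> > 0"
  shows "\<exists>\<Lambda>. has_short_progressions \<Lambda> \<and>
           (\<forall>F i. finite F \<longrightarrow> F \<subseteq> \<Lambda> \<longrightarrow> i \<in> F \<longrightarrow> (\<Sum>x\<in>F - {i}. G (i - x)) \<le> 3 * \<epsilon>)"
proof -
  obtain l where l: "\<And>N. l N \<ge> 1" "\<And>N. (\<Sum>m\<in>{1..<N}. G (int m * int (l N))) \<le> \<epsilon>"
    and l_short: "\<forall>\<alpha>>1. \<exists>C>0. \<forall>N\<ge>1. real (l N) < C * real N powr \<alpha>"
    using exists_uniformly_short_steps[OF G_nonneg bessel \<open>\<epsilon> > 0\<close>] by blast
  define D where
    "D j = (if j = 0 then 1 else SOME D. D \<ge> 1 \<and> (\<forall>n. D \<le> \<bar>n\<bar> \<longrightarrow> G n \<le> \<epsilon> / (j * 2 ^ j)))" for j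
  have D: "D j \<ge> 1 \<and> (j \<ge> 1 \<longrightarrow> (\<forall>n. D j \<le> \<bar>n\<bar> \<longrightarrow> G n \<le> \<epsilon> / (j * 2 ^ j)))" for j
    using someI_ex[OF decay[of "\<epsilon> / (j * 2 ^ j)"]] \<open>\<epsilon> > 0\<close> unfolding D_def by auto
  define \<Lambda> where "\<Lambda> = (\<Union>j. block l D j)"
  have "progression (block_start l D N) (l N) N \<subseteq> \<Lambda>" for N
    unfolding \<Lambda>_def block_def by blast
  with l(1) l_short have "has_short_progressions \<Lambda>"
    unfolding has_short_progressions_def by meson
  moreover have "(\<Sum>x\<in>F - {i}. G (i - x)) \<le> 3 * \<epsilon>" if "finite F" "F \<subseteq> \<Lambda>" "i \<in> F" for F i
    using \<open>\<epsilon> > 0\<close> D l that unfolding \<Lambda>_def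
    by (intro sum_blocks_row_le[where G=G and D=D and l=l, OF G_nonneg G_sym]) auto
  ultimately show ?thesis
    by blast
qed

theorem theorem3:
  fixes S :: "real set"
  assumes "S \<subseteq> {-pi..<pi}"
    and "S \<in> sets lebesgue"
    and "emeasure lebesgue S > 0"
  shows "\<exists>\<Lambda> :: int set.
           (\<forall>\<alpha>::real. \<alpha> > 1 \<longrightarrow>
              (\<exists>C::real. C > 0 \<and>
                 (\<forall>N::nat. N \<ge> 1 \<longrightarrow>
                    (\<exists>(M::int) (l::nat). l \<ge> 1 \<and> real l < C * real N powr \<alpha> \<and>
                        {M + int k * int l | k. 1 \<le> k \<and> k \<le> N} \<subseteq> \<Lambda>)))) \<and>
           riesz_sequence_L2 S \<Lambda> exps"
proof -
  have S: "S \<in> sets lebesgue" "S \<subseteq> {-pi..pi}"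
    using assms(1,2) by auto
  have "measure lebesgue S > 0"
    using assms(3) emeasure_subset_period_finite[OF S(2)] by (simp add: measure_def enn2real_positive_iff)
  define G where "G n = cmod (exps_integral S n)" for n
  have G_nonneg: "\<And>n. 0 \<le> G n" and G_sym: "\<And>n. G (-n) = G n"
    unfolding G_def by (simp_all add: exps_integral_uminus)
  have bessel: "\<And>P. finite P \<Longrightarrow> (\<Sum>n\<in>P. (G n)\<^sup>2) \<le> 2*pi * measure lebesgue S"
    unfolding G_def by (rule bessel_exps_integral[OF S])
  have decay: "\<exists>D\<ge>1. \<forall>n. D \<le> \<bar>n\<bar> \<longrightarrow> G n \<le> \<delta>" if "\<delta> > 0" for \<delta>
    by (rule eventually_le_of_finite_above[OF finite_above_of_bounded_sum_squares[OF bessel that]])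
  obtain \<Lambda> where "has_short_progressions \<Lambda>"
    and rows: "\<And>F i. finite F \<Longrightarrow> F \<subseteq> \<Lambda> \<Longrightarrow> i \<in> F \<Longrightarrow> (\<Sum>x\<in>F - {i}. G (i - x)) \<le> 3 * (measure lebesgue S / 6)"
    using exists_short_progressions_small_rows[where \<epsilon>="measure lebesgue S / 6", OF G_nonneg G_sym bessel decay]
      \<open>measure lebesgue S > 0\<close> by auto
  moreover have "riesz_sequence_L2 S \<Lambda> exps"
    using rows \<open>measure lebesgue S > 0\<close>
    by (intro riesz_sequence_exps_of_row_sums[OF S, of "measure lebesgue S / 2"]) (auto simp: G_def)
  ultimately show ?thesis
    unfolding has_short_progressions_def progression_def by blast
qed

end
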